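(* Let $\mathfrak R$ be an iterated graph system satisfying (GR1)–(GR3), with replacement graphs $G_m$. Every path in a replacement graph containing at most two distinct vertices, and every non-collapsing path, is an intersection path. Moreover, if $\theta$ is an intersection path in $G_m$ and $\{\theta_n\}_{n\in\mathbb N}$ is a sequence of paths witnessing this (as in the definition of intersection path), then $\theta_n$ is non-collapsing for all sufficiently large $n\in\mathbb N$. In particular, $\mathfrak R$ is of bounded geometry if and only if \[ \sup_\theta\operatorname{diam}(\theta)<\infty, \] where the supremum is over all non-collapsing paths $\theta$ in all replacement graphs $G_n$, and $\operatorname{diam}(\theta)$ is the diameter of the vertex set of $\theta$ with respect to $d_{G_n}$.
   Context: Graphs: $(V,E)$, $V$ finite non-empty, $E\subseteq V\times V$, $(x,y)\in E\Rightarrow(y,x)\notin E$; $\{x,y\}\in E$ means either orientation. A path is a sequence $[x_1,\dots,x_k]$ ($k\ge1$, repetitions allowed) with $\{x_i,x_{i+1}\}\in E$; its length is $k-1$; $d_G$ is the shortest-path metric. An iterated graph system (IGS) consists of a connected graph $G_1=(S,E)$, a finite set $\mathcal T$ of types, a surjective typing $\mathfrak t:E\to\mathcal T$ and non-empty gluing rules $I_t\subseteq S\times S$. With $W_m=S^m$, $W_\#=\bigcup_{m\ge1} W_m$, $[w]_k=w_1\cdots w_k$ and $|w\wedge v|=\min\{k:[w]_k\neq[v]_k\}$ for distinct words of equal length, the replacement graphs $G_m=(W_m,E_m)$ are defined recursively: $(w,v)\in E_{m+1}$ iff either (1) $[w]_m=[v]_m$ and $(w_{m+1},v_{m+1})\in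 E$ (type $\mathfrak t(w_{m+1},v_{m+1})$), or (2) $([w]_m,[v]_m)\in E_m$ and $(w_{m+1},v_{m+1})\in I_{\mathfrak t([w]_m,[v]_m)}$ (type $\mathfrak t([w]_m,[v]_m)$). (GR1)–(GR3): with $I_{t,+}$, $I_{t,-}$ the first, resp. second, coordinates of $I_t$: (GR1) each $w\in S$ has at most one $v$ with $(w,v)\in I_t$ and at most one $v$ with $(v,w)\in I_t$; (GR2) for each $t$ and $w$, $w$ cannot both have some $v$ with $(w,v)\in I_t$ and an outgoing edge of $G_1$ of type $t$, and cannot both have some $v$ with $(v,w)\in I_t$ and an incoming edge of $G_1$ of type $t$; (GR3) $I_{t,-}\cap I_{t,+}=\emptyset$. For $n\ge k$, $\pi_{n,k}:W_n\to W_k$, $w\mapsto[w]_k$; it maps paths of $G_n$ to paths of $G_k$ by applying it to each vertex and deleting consecutive repetitions. A path $\theta$ in $G_m$ is an intersection path if there are paths $\theta_n$ in $G_n$ for all $n\in\mathbb N$ with $\theta_m=\theta$, $\pi_{n,k}(\theta_n)=\theta_k$ for all $n>k$, and $\lim_{n\to\infty}\operatorname{len}(\theta_n)<\infty$. The fundamental neighbourhood of $w\in W_\#$ is $\mathcal N(w)=\{v\in W_{|w|}:$ there is an intersection path from $w$ to $v\}$; $\mathfrak R$ is of bounded geometry if $\sup_{w\in W_\#}\operatorname{diam}(\mathcal N(w))<\infty$ (diameter in $d_{G_{|w|}}$). For $n>1$, a path $[w^{(1)},\dots,w^{(k)}]$ in $G_n$ is non-collapsing if $|w^{(i)}\wedge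 w^{(i+1)}|<n$ for all $i=1,\dots,k-1$. *)

theory Defs
  imports Main "HOL-Library.Extended_Nat"
begin

text \<open>Vertices of G_1 have type 'v (the set S), types have
type 't (the set T), the typing is tp (meaningful on E), the gluing rules are I t.
Words are lists; w = w_1 ... w_m corresponds to the list [w_1,...,w_m].\<close>

definition is_IGS :: "'v set \<Rightarrow> ('v \<times> 'v) set \<Rightarrow> ('v \<times> 'v \<Rightarrow> 't) \<Rightarrow> 't set
    \<Rightarrow> ('t \<Rightarrow> ('v \<times> 'v) set) \<Rightarrow> bool" where
  "is_IGS S E tp T I \<longleftrightarrow>
     finite S \<and> S \<noteq> {} \<and> E \<subseteq> S \<times> S \<and>
     (\<forall>x y. (x, y) \<in> E \<longrightarrow> (y, x) \<notin> E) \<and>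
     (\<forall>x\<in>S. \<forall>y\<in>S. (x, y) \<in> (E \<union> E\<inverse>)\<^sup>*) \<and>
     finite T \<and> tp ` E = T \<and>
     (\<forall>t\<in>T. I t \<noteq> {} \<and> I t \<subseteq> S \<times> S)"

definition GR1 :: "'v set \<Rightarrow> 't set \<Rightarrow> ('t \<Rightarrow> ('v \<times> 'v) set) \<Rightarrow> bool" where
  "GR1 S T I \<longleftrightarrow> (\<forall>t\<in>T. \<forall>w\<in>S.
     (\<forall>v v'. (w, v) \<in> I t \<longrightarrow> (w, v') \<in> I t \<longrightarrow> v = v') \<and>
     (\<forall>v v'. (v, w) \<in> I t \<longrightarrow> (v', w) \<in> I t \<longrightarrow> v = v'))"

definition GR2 :: "'v set \<Rightarrow> ('v \<times> 'v) set \<Rightarrow> ('v \<times> 'v \<Rightarrow> 't) \<Rightarrow> 't set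
    \<Rightarrow> ('t \<Rightarrow> ('v \<times> 'v) set) \<Rightarrow> bool" where
  "GR2 S E tp T I \<longleftrightarrow> (\<forall>t\<in>T. \<forall>w\<in>S.
     \<not> ((\<exists>v. (w, v) \<in> I t) \<and> (\<exists>v. (w, v) \<in> E \<and> tp (w, v) = t)) \<and>
     \<not> ((\<exists>v. (v, w) \<in> I t) \<and> (\<exists>v. (v, w) \<in> E \<and> tp (v, w) = t)))"

definition GR3 :: "'t set \<Rightarrow> ('t \<Rightarrow> ('v \<times> 'v) set) \<Rightarrow> bool" where
  "GR3 T I \<longleftrightarrow> (\<forall>t\<in>T. snd ` I t \<inter> fst ` I t = {})"

definition words :: "'v set \<Rightarrow> nat \<Rightarrow> 'v list set" where
  "words S m = {w. length w = m \<and> set w \<subseteq> S}"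

definition all_words :: "'v set \<Rightarrow> 'v list set" where
  "all_words S = (\<Union>m\<in>{1..}. words S m)"

fun typed_edges :: "'v set \<Rightarrow> ('v \<times> 'v) set \<Rightarrow> ('v \<times> 'v \<Rightarrow> 't)
    \<Rightarrow> ('t \<Rightarrow> ('v \<times> 'v) set) \<Rightarrow> nat \<Rightarrow> ('v list \<times> 'v list \<times> 't) set" where
  "typed_edges S E tp I 0 = {}"
| "typed_edges S E tp I (Suc 0) = {([a], [b], tp (a, b)) | a b. (a, b) \<in> E}"
| "typed_edges S E tp I (Suc (Suc m)) =
     {(u @ [a], u @ [b], tp (a, b)) | u a b. u \<in> words S (Suc m) \<and> (a, b) \<in> E}
   \<union> {(u @ [a], v @ [b], t) | u v a b t. (u, v, t) \<in> typed_edges S E tp I (Suc m) \<and> (a, b) \<in> I t}"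

definition edges :: "'v set \<Rightarrow> ('v \<times> 'v) set \<Rightarrow> ('v \<times> 'v \<Rightarrow> 't)
    \<Rightarrow> ('t \<Rightarrow> ('v \<times> 'v) set) \<Rightarrow> nat \<Rightarrow> ('v list \<times> 'v list) set" where
  "edges S E tp I m = {(w, v). \<exists>t. (w, v, t) \<in> typed_edges S E tp I m}"

definition is_path :: "'v set \<Rightarrow> ('v \<times> 'v) set \<Rightarrow> ('v \<times> 'v \<Rightarrow> 't)
    \<Rightarrow> ('t \<Rightarrow> ('v \<times> 'v) set) \<Rightarrow> nat \<Rightarrow> 'v list list \<Rightarrow> bool" where
  "is_path S E tp I m \<theta> \<longleftrightarrow> \<theta> \<noteq> [] \<and> set \<theta> \<subseteq> words S m \<and>
     (\<forall>i. Suc i < length \<theta> \<longrightarrow>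
        (\<theta> ! i, \<theta> ! Suc i) \<in> edges S E tp I m \<or> (\<theta> ! Suc i, \<theta> ! i) \<in> edges S E tp I m)"

definition path_len :: "'a list \<Rightarrow> nat" where
  "path_len \<theta> = length \<theta> - 1"

definition dG :: "'v set \<Rightarrow> ('v \<times> 'v) set \<Rightarrow> ('v \<times> 'v \<Rightarrow> 't)
    \<Rightarrow> ('t \<Rightarrow> ('v \<times> 'v) set) \<Rightarrow> nat \<Rightarrow> 'v list \<Rightarrow> 'v list \<Rightarrow> nat" where
  "dG S E tp I m x y = (LEAST k. \<exists>\<theta>. is_path S E tp I m \<theta> \<and> hd \<theta> = x \<and> last \<theta> = y \<and> path_len \<theta> = k)"

definition diamG :: "'v set \<Rightarrow> ('v \<times> 'v) set \<Rightarrow> ('v \<times> 'v \<Rightarrow> 't)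
    \<Rightarrow> ('t \<Rightarrow> ('v \<times> 'v) set) \<Rightarrow> nat \<Rightarrow> 'v list set \<Rightarrow> enat" where
  "diamG S E tp I m A = (SUP x\<in>A. SUP y\<in>A. enat (dG S E tp I m x y))"

definition proj :: "nat \<Rightarrow> 'v list list \<Rightarrow> 'v list list" where
  "proj k \<theta> = remdups_adj (map (take k) \<theta>)"

definition ipath_witness :: "'v set \<Rightarrow> ('v \<times> 'v) set \<Rightarrow> ('v \<times> 'v \<Rightarrow> 't)
    \<Rightarrow> ('t \<Rightarrow> ('v \<times> 'v) set) \<Rightarrow> nat \<Rightarrow> 'v list list \<Rightarrow> (nat \<Rightarrow> 'v list list) \<Rightarrow> bool" where
  "ipath_witness S E tp I m \<theta> \<Theta> \<longleftrightarrow>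
     1 \<le> m \<and> (\<forall>n\<ge>1. is_path S E tp I n (\<Theta> n)) \<and> \<Theta> m = \<theta> \<and>
     (\<forall>n k. 1 \<le> k \<and> k < n \<longrightarrow> proj k (\<Theta> n) = \<Theta> k) \<and>
     convergent (\<lambda>n. real (path_len (\<Theta> n)))"

definition intersection_path :: "'v set \<Rightarrow> ('v \<times> 'v) set \<Rightarrow> ('v \<times> 'v \<Rightarrow> 't)
    \<Rightarrow> ('t \<Rightarrow> ('v \<times> 'v) set) \<Rightarrow> nat \<Rightarrow> 'v list list \<Rightarrow> bool" where
  "intersection_path S E tp I m \<theta> \<longleftrightarrow> (\<exists>\<Theta>. ipath_witness S E tp I m \<theta> \<Theta>)"

definition fund_nbhd :: "'v set \<Rightarrow> ('v \<times> 'v) set \<Rightarrow> ('v \<times> 'v \<Rightarrow> 't)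
    \<Rightarrow> ('t \<Rightarrow> ('v \<times> 'v) set) \<Rightarrow> 'v list \<Rightarrow> 'v list set" where
  "fund_nbhd S E tp I w = {v \<in> words S (length w). \<exists>\<theta>.
     intersection_path S E tp I (length w) \<theta> \<and> hd \<theta> = w \<and> last \<theta> = v}"

definition bounded_geometry :: "'v set \<Rightarrow> ('v \<times> 'v) set \<Rightarrow> ('v \<times> 'v \<Rightarrow> 't)
    \<Rightarrow> ('t \<Rightarrow> ('v \<times> 'v) set) \<Rightarrow> bool" where
  "bounded_geometry S E tp I \<longleftrightarrow>
     (SUP w\<in>all_words S. diamG S E tp I (length w) (fund_nbhd S E tp I w)) < \<infinity>"

definition wedge :: "'v list \<Rightarrow> 'v list \<Rightarrow> nat" where
  "wedge w v = (LEAST k. take k w \<noteq> take k v)"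

definition non_collapsing :: "nat \<Rightarrow> 'v list list \<Rightarrow> bool" where
  "non_collapsing n \<theta> \<longleftrightarrow> (\<forall>i. Suc i < length \<theta> \<longrightarrow> wedge (\<theta> ! i) (\<theta> ! Suc i) < n)"

end

theory Submission
  imports Defs
begin

(* A path in G_m each of whose edges, of type t, carries a gluing pair (c x, c y) in I_t for a
   choice of letters c persists at all deeper levels: appending (c x)^(n-m) to every vertex x gives a
   path in G_n of the same length, and together with the projections of the path this is a witness
   sequence of eventually constant length.  Every edge of a non-collapsing path is of gluing type,
   so c = last works; a path on two vertices runs back and forth along one edge, so any gluing pair
   of its type works.
   Conversely, the lengths of a witness sequence are natural numbers converging, hence eventually
   constant, and then projecting Theta_n to level n - 1 deletes no vertex: Theta_n is non-collapsing.
   Hence the vertices of a non-collapsing path lie in the fundamental neighbourhood of its first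
   vertex (its prefixes are non-collapsing), and every v in N(w) is within distance D of w, where D
   bounds the diameters of non-collapsing paths: project a shortest path joining the endpoints of a
   non-collapsing Theta_n down to level |w|. *)

lemma remdups_adj_idem [simp]: "remdups_adj (remdups_adj xs) = remdups_adj xs"
  using distinct_adj_altdef distinct_adj_remdups_adj by blast

lemma remdups_adj_Cons_remdups_adj: "remdups_adj (x # remdups_adj xs) = remdups_adj (x # xs)"
  by (simp only: remdups_adj_Cons remdups_adj_idem)

lemma remdups_adj_map_remdups_adj:
  "remdups_adj (map f (remdups_adj xs)) = remdups_adj (map f xs)"
proof (induction xs rule: remdups_adj.induct)
  case (3 x y xs)
  show ?case
  proof (cases "x = y")
    case False
    have "remdups_adj (map f (remdups_adj (x # y # xs)))
        = remdups_adj (f x # remdups_adj (map f (remdups_adj (y # xs))))"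
      using False by (simp only: remdups_adj_Cons_remdups_adj remdups_adj.simps if_False list.map)
    also have "\<dots> = remdups_adj (f x # remdups_adj (map f (y # xs)))"
      using "3.IH"(2) False by simp
    also have "\<dots> = remdups_adj (map f (x # y # xs))"
      by (simp only: remdups_adj_Cons_remdups_adj list.map)
    finally show ?thesis .
  qed (use 3 in simp)
qed simp_all

lemma convergent_of_nat_eventually_const:
  assumes "convergent (\<lambda>n. real (f n))"
  shows "\<exists>N. \<forall>n\<ge>N. f n = f N"
proof -
  obtain N where N: "\<forall>p\<ge>N. \<forall>q\<ge>N. norm (real (f p) - real (f q)) < 1"
    using CauchyD[OF convergent_Cauchy[OF assms], of 1] by auto
  have "f n = f N" if "n \<ge> N" for n
    using N[rule_format, OF that order_refl] by simp
  then show ?thesis by blast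
qed

lemma enat_SUP_less_infinity_iff:
  "(SUP x\<in>A. f x) < (\<infinity>::enat) \<longleftrightarrow> (\<exists>D. \<forall>x\<in>A. f x \<le> enat D)"
proof
  assume "(SUP x\<in>A. f x) < \<infinity>"
  then obtain D where "(SUP x\<in>A. f x) = enat D" using less_infinityE by blast
  then show "\<exists>D. \<forall>x\<in>A. f x \<le> enat D" by (metis SUP_upper)
next
  assume "\<exists>D. \<forall>x\<in>A. f x \<le> enat D"
  then obtain D where "\<forall>x\<in>A. f x \<le> enat D" by blast
  then have "(SUP x\<in>A. f x) \<le> enat D" by (simp add: SUP_least)
  then show "(SUP x\<in>A. f x) < \<infinity>" by (rule le_less_trans) simp
qed

lemma wedge_le: "take k x \<noteq> take k y \<Longrightarrow> wedge x y \<le> k"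
  unfolding wedge_def by (rule Least_le)

lemma wedge_less_iff_take_neq:
  assumes "x \<noteq> y" "length x = n" "length y = n"
  shows "wedge x y < n \<longleftrightarrow> take (n - 1) x \<noteq> take (n - 1) y"
proof
  assume "wedge x y < n"
  then have "take (wedge x y) (take (n - 1) x) = take (wedge x y) x"
    "take (wedge x y) (take (n - 1) y) = take (wedge x y) y"
    by (simp_all add: min_absorb1)
  moreover have "take (wedge x y) x \<noteq> take (wedge x y) y"
    unfolding wedge_def by (rule LeastI[of _ n]) (use assms in simp)
  ultimately show "take (n - 1) x \<noteq> take (n - 1) y" by metis
next
  assume "take (n - 1) x \<noteq> take (n - 1) y"
  moreover have "n \<noteq> 0" using assms by auto
  ultimately show "wedge x y < n" using wedge_le by fastforce
qed

lemma non_collapsing_take: "non_collapsing n \<theta> \<Longrightarrow> non_collapsing n (take j \<theta>)"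
  unfolding non_collapsing_def by simp

lemma take_in_words: "x \<in> words S n \<Longrightarrow> k \<le> n \<Longrightarrow> take k x \<in> words S k"
  unfolding words_def using set_take_subset by fastforce

lemma append_replicate_in_words:
  "x \<in> words S m \<Longrightarrow> a \<in> S \<Longrightarrow> x @ replicate r a \<in> words S (m + r)"
  unfolding words_def by auto

lemma last_in_words_alphabet: "x \<in> words S n \<Longrightarrow> 0 < n \<Longrightarrow> last x \<in> S"
  unfolding words_def by (metis (mono_tags, lifting) last_in_set length_greater_0_conv mem_Collect_eq subsetD)

locale iterated_graph_system =
  fixes S :: "'v set" and E :: "('v \<times> 'v) set" and tp :: "'v \<times> 'v \<Rightarrow> 't"
    and T :: "'t set" and I :: "'t \<Rightarrow> ('v \<times> 'v) set"
  assumes is_IGS: "is_IGS S E tp T I"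
begin

abbreviation te :: "nat \<Rightarrow> ('v list \<times> 'v list \<times> 't) set" where
  "te \<equiv> typed_edges S E tp I"

abbreviation adjacent :: "nat \<Rightarrow> 'v list \<Rightarrow> 'v list \<Rightarrow> bool" where
  "adjacent n x y \<equiv> (x, y) \<in> edges S E tp I n \<or> (y, x) \<in> edges S E tp I n"

lemma S_nonempty: "S \<noteq> {}"
  and E_subset: "E \<subseteq> S \<times> S"
  and E_asym: "(x, y) \<in> E \<Longrightarrow> (y, x) \<notin> E"
  and tp_E: "tp ` E = T"
  and I_nonempty: "t \<in> T \<Longrightarrow> I t \<noteq> {}"
  and I_subset: "t \<in> T \<Longrightarrow> I t \<subseteq> S \<times> S"
  using is_IGS unfolding is_IGS_def by auto

lemma typed_edge_wf:
  "(x, y, t) \<in> te n \<Longrightarrow> x \<in> words S n \<and> y \<in> words S n \<and> t \<in> T \<and> x \<noteq> y"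
proof (induction n arbitrary: x y t)
  case (Suc n)
  note IH = Suc.IH and edge = Suc.prems
  show ?case
  proof (cases n)
    case 0
    then show ?thesis using edge E_subset E_asym tp_E by (auto simp: words_def)
  next
    case (Suc m)
    from edge Suc consider
        (inner) u a b where "x = u @ [a]" "y = u @ [b]" "u \<in> words S n" "(a, b) \<in> E"
          "t = tp (a, b)"
      | (glued) u v a b where "x = u @ [a]" "y = v @ [b]" "(u, v, t) \<in> te n" "(a, b) \<in> I t"
      by auto
    then show ?thesis
    proof cases
      case inner
      then show ?thesis using E_subset E_asym tp_E by (auto simp: words_def)
    next
      case glued
      then show ?thesis using IH[OF glued(3)] I_subset by (auto simp: words_def)
    qed
  qed
qed simp

lemma edge_wf: "(x, y) \<in> edges S E tp I n \<Longrightarrow> x \<in> words S n \<and> y \<in> words S n \<and> x \<noteq> y"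
  unfolding edges_def using typed_edge_wf by blast

lemma typed_edge_append_replicate:
  assumes "(x, y, t) \<in> te n" "1 \<le> n" "(a, b) \<in> I t"
  shows "(x @ replicate r a, y @ replicate r b, t) \<in> te (n + r)"
proof (induction r)
  case (Suc r)
  obtain j where j: "n + r = Suc j" using assms(2) by (cases "n + r") auto
  have "(x @ replicate r a @ [a], y @ replicate r b @ [b], t) \<in> te (Suc (Suc j))"
    using Suc.IH assms(3) j by auto
  then show ?case using j by (simp add: replicate_append_same)
qed (use assms in simp)

lemma edge_take:
  assumes "(x, y) \<in> edges S E tp I n" "1 \<le> k" "k \<le> n"
  shows "take k x = take k y \<or> (take k x, take k y) \<in> edges S E tp I k"
  using assms
proof (induction n arbitrary: x y)
  case (Suc n)
  note IH = Suc.IH and edge = Suc.prems(1) and k = Suc.prems(2,3)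
  show ?case
  proof (cases "k = Suc n")
    case True
    then show ?thesis using edge edge_wf[OF edge] by (simp add: words_def)
  next
    case False
    then obtain m where n: "n = Suc m" and "k \<le> n" using k by (cases n) auto
    from edge obtain t where "(x, y, t) \<in> te (Suc (Suc m))" unfolding edges_def n by blast
    then consider
        (inner) u a b where "x = u @ [a]" "y = u @ [b]" "u \<in> words S n"
      | (glued) u v a b where "x = u @ [a]" "y = v @ [b]" "(u, v, t) \<in> te n"
      unfolding n by auto
    then show ?thesis
    proof cases
      case inner
      then show ?thesis using \<open>k \<le> n\<close> by (simp add: words_def)
    next
      case glued
      then have "length u = n" "length v = n" using typed_edge_wf by (auto simp: words_def)
      moreover have "take k u = take k v \<or> (take k u, take k v) \<in> edges S E tp I k"
        using IH[OF _ k(1) \<open>k \<le> n\<close>] glued(3) unfolding edges_def by blast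
      ultimately show ?thesis using glued(1,2) \<open>k \<le> n\<close> by simp
    qed
  qed
qed simp

lemma typed_edge_last_in_I:
  assumes edge: "(x, y, t) \<in> te n" and "take (n - 1) x \<noteq> take (n - 1) y"
  shows "(last x, last y) \<in> I t"
proof -
  obtain m where n: "n = Suc (Suc m)"
  proof (cases n)
    case 0
    then show ?thesis using edge by simp
  next
    case (Suc k)
    then show ?thesis using assms that by (cases k) auto
  qed
  from edge consider
      (inner) u a b where "x = u @ [a]" "y = u @ [b]" "u \<in> words S (Suc m)"
    | (glued) u v a b where "x = u @ [a]" "y = v @ [b]" "(a, b) \<in> I t"
    unfolding n by auto
  then show ?thesis
  proof cases
    case inner
    then show ?thesis using assms(2) unfolding n by (simp add: words_def)
  qed simp
qed

lemma adjacent_take: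
  "adjacent n x y \<Longrightarrow> 1 \<le> k \<Longrightarrow> k \<le> n
    \<Longrightarrow> take k x = take k y \<or> adjacent k (take k x) (take k y)"
  using edge_take by metis

lemma is_path_iff_successively:
  "is_path S E tp I n \<theta> \<longleftrightarrow> \<theta> \<noteq> [] \<and> set \<theta> \<subseteq> words S n \<and> successively (adjacent n) \<theta>"
  unfolding is_path_def successively_conv_nth by auto

lemma is_path_distinct_adj: "is_path S E tp I n \<theta> \<Longrightarrow> distinct_adj \<theta>"
  unfolding is_path_iff_successively distinct_adj_def using edge_wf
  by (auto elim!: successively_mono)

lemma is_path_length:
  "is_path S E tp I n \<theta> \<Longrightarrow> x \<in> set \<theta> \<Longrightarrow> length x = n"
  unfolding is_path_def words_def by auto

lemma is_path_rev: "is_path S E tp I n \<pi> \<Longrightarrow> is_path S E tp I n (rev \<pi>)"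
  unfolding is_path_iff_successively successively_rev by (auto elim!: successively_mono)

lemma is_path_append_tl:
  assumes "is_path S E tp I n \<pi>" "is_path S E tp I n \<rho>" "last \<pi> = hd \<rho>"
  shows "is_path S E tp I n (\<pi> @ tl \<rho>)"
proof -
  obtain a r where \<rho>: "\<rho> = a # r" using assms(2) unfolding is_path_def by (cases \<rho>) auto
  have "\<pi> \<noteq> []" using assms(1) unfolding is_path_def by simp
  then show ?thesis
    using assms unfolding is_path_iff_successively \<rho>
    by (auto simp: successively_append_iff successively_Cons)
qed

lemma is_path_take:
  "is_path S E tp I n \<theta> \<Longrightarrow> 0 < j \<Longrightarrow> is_path S E tp I n (take j \<theta>)"
  unfolding is_path_def using set_take_subset[of j \<theta>] by auto

lemma proj_proj: "k \<le> n \<Longrightarrow> proj k (proj n \<theta>) = proj k \<theta>"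
  unfolding proj_def by (simp add: remdups_adj_map_remdups_adj min_def o_def)

lemma hd_proj: "\<theta> \<noteq> [] \<Longrightarrow> hd (proj k \<theta>) = take k (hd \<theta>)"
  and last_proj: "\<theta> \<noteq> [] \<Longrightarrow> last (proj k \<theta>) = take k (last \<theta>)"
  unfolding proj_def by (simp_all add: hd_map last_map)

lemma path_len_proj_le: "path_len (proj k \<theta>) \<le> path_len \<theta>"
  unfolding proj_def path_len_def using remdups_adj_length[of "map (take k) \<theta>"] by simp

lemma proj_path_self: "is_path S E tp I n \<theta> \<Longrightarrow> proj n \<theta> = \<theta>"
  unfolding proj_def
  using is_path_length is_path_distinct_adj distinct_adj_altdef by (metis map_idI take_all order_refl)

lemma is_path_proj:
  assumes path: "is_path S E tp I n \<theta>" and k: "1 \<le> k" "k \<le> n"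
  shows "is_path S E tp I k (proj k \<theta>)"
proof -
  have "successively (\<lambda>x y. x = y \<or> adjacent k x y) (map (take k) \<theta>)"
    using path adjacent_take[OF _ k] unfolding is_path_iff_successively successively_map
    by (auto elim!: successively_mono)
  then have "successively (\<lambda>x y. x = y \<or> adjacent k x y) (proj k \<theta>)"
    unfolding proj_def by (rule successively_remdups_adjI)
  moreover have "distinct_adj (proj k \<theta>)" unfolding proj_def by simp
  ultimately have "successively (adjacent k) (proj k \<theta>)"
    unfolding distinct_adj_def successively_conv_nth by blast
  moreover have "set (proj k \<theta>) \<subseteq> words S k"
    using path k unfolding proj_def is_path_def by (auto intro!: take_in_words)
  moreover have "proj k \<theta> \<noteq> []" using path unfolding proj_def is_path_def by simp
  ultimately show ?thesis unfolding is_path_iff_successively by simp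
qed

definition glued_edge :: "nat \<Rightarrow> ('v list \<Rightarrow> 'v) \<Rightarrow> 'v list \<Rightarrow> 'v list \<Rightarrow> bool" where
  "glued_edge n c x y \<longleftrightarrow> (\<exists>t. (x, y, t) \<in> te n \<and> (c x, c y) \<in> I t)"

abbreviation glued_adjacent :: "nat \<Rightarrow> ('v list \<Rightarrow> 'v) \<Rightarrow> 'v list \<Rightarrow> 'v list \<Rightarrow> bool" where
  "glued_adjacent n c x y \<equiv> glued_edge n c x y \<or> glued_edge n c y x"

lemma glued_adjacent_append_replicate:
  "glued_adjacent m c x y \<Longrightarrow> 1 \<le> m
    \<Longrightarrow> adjacent (m + r) (x @ replicate r (c x)) (y @ replicate r (c y))"
  unfolding glued_edge_def edges_def using typed_edge_append_replicate by blast

lemma is_path_append_replicate_if_glued: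
  assumes path: "is_path S E tp I m \<theta>" and m: "1 \<le> m" "m \<le> n"
    and c_in_S: "\<forall>x\<in>set \<theta>. c x \<in> S" and glued: "successively (glued_adjacent m c) \<theta>"
  shows "is_path S E tp I n (map (\<lambda>x. x @ replicate (n - m) (c x)) \<theta>)"
proof -
  have "successively (adjacent (m + (n - m))) (map (\<lambda>x. x @ replicate (n - m) (c x)) \<theta>)"
    unfolding successively_map
    using glued glued_adjacent_append_replicate[OF _ m(1)] by (auto elim!: successively_mono)
  moreover have "set (map (\<lambda>x. x @ replicate (n - m) (c x)) \<theta>) \<subseteq> words S n"
    using path c_in_S m append_replicate_in_words[of _ S m _ "n - m"]
    unfolding is_path_def by auto
  ultimately show ?thesis using path m unfolding is_path_iff_successively by simp
qed

lemma intersection_path_if_glued: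
  assumes path: "is_path S E tp I m \<theta>" and m: "1 \<le> m"
    and c_in_S: "\<forall>x\<in>set \<theta>. c x \<in> S" and glued: "successively (glued_adjacent m c) \<theta>"
  shows "intersection_path S E tp I m \<theta>"
proof -
  define P where "P n = map (\<lambda>x. x @ replicate (n - m) (c x)) \<theta>" for n
  have P_path: "is_path S E tp I n (P n)" if "m \<le> n" for n
    unfolding P_def using is_path_append_replicate_if_glued[OF path m that c_in_S glued] .
  have take_P: "map (take k) (P n) = map (take k) (P k)" if "k \<le> n" for k n
    unfolding P_def using that is_path_length[OF path] by (auto simp: take_append min_def)
  \<comment> \<open>below level \<open>m\<close> we have \<open>P n = \<theta>\<close>, so \<open>\<Theta> n\<close> is the projection of \<open>\<theta>\<close> there\<close>
  define \<Theta> where "\<Theta> n = proj n (P n)" for n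
  have \<Theta>_max: "\<Theta> n = proj n (P (max n m))" for n
    unfolding \<Theta>_def proj_def using take_P[of n "max n m"] by simp
  have \<Theta>_eq_P: "\<Theta> n = P n" if "m \<le> n" for n
    unfolding \<Theta>_def using proj_path_self[OF P_path[OF that]] .
  have "ipath_witness S E tp I m \<theta> \<Theta>"
    unfolding ipath_witness_def
  proof (intro conjI allI impI)
    show "is_path S E tp I n (\<Theta> n)" if "1 \<le> n" for n
      unfolding \<Theta>_max using is_path_proj[OF P_path that] by simp
    show "\<Theta> m = \<theta>"
      using \<Theta>_eq_P[of m] unfolding P_def by simp
    show "proj k (\<Theta> n) = \<Theta> k" if "1 \<le> k \<and> k < n" for n k
    proof -
      have "proj k (\<Theta> n) = proj k (P n)"
        unfolding \<Theta>_def using that by (simp add: proj_proj)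
      also have "\<dots> = \<Theta> k"
        unfolding \<Theta>_def proj_def using take_P[of k n] that by simp
      finally show ?thesis .
    qed
    have "\<forall>n\<ge>m. real (path_len (\<Theta> n)) = real (path_len \<theta>)"
      using \<Theta>_eq_P unfolding P_def path_len_def by simp
    then have "(\<lambda>n. real (path_len (\<Theta> n))) \<longlonglongrightarrow> real (path_len \<theta>)"
      by (intro tendsto_eventually) (auto simp: eventually_sequentially)
    then show "convergent (\<lambda>n. real (path_len (\<Theta> n)))"
      by (rule convergentI)
  qed (use m in simp)
  then show ?thesis unfolding intersection_path_def by blast
qed

lemma non_collapsing_iff_distinct_adj_take:
  assumes path: "is_path S E tp I n \<theta>"
  shows "non_collapsing n \<theta> \<longleftrightarrow> distinct_adj (map (take (n - 1)) \<theta>)"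
proof -
  have "wedge (\<theta> ! i) (\<theta> ! Suc i) < n \<longleftrightarrow> take (n - 1) (\<theta> ! i) \<noteq> take (n - 1) (\<theta> ! Suc i)"
    if "Suc i < length \<theta>" for i
    using that is_path_distinct_adj[OF path] is_path_length[OF path]
    by (intro wedge_less_iff_take_neq) (auto simp: distinct_adj_nth)
  then show ?thesis unfolding non_collapsing_def distinct_adj_conv_nth by auto
qed

lemma glued_adjacent_last_if_take_neq:
  assumes "adjacent n x y" and take_neq: "take (n - 1) x \<noteq> take (n - 1) y"
  shows "glued_adjacent n last x y"
proof -
  obtain t where "(x, y, t) \<in> te n \<or> (y, x, t) \<in> te n"
    using assms(1) unfolding edges_def by auto
  then show ?thesis
    using typed_edge_last_in_I take_neq not_sym[OF take_neq] unfolding glued_edge_def by blast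
qed

lemma intersection_path_if_non_collapsing:
  assumes n: "1 < n" and path: "is_path S E tp I n \<theta>" and nc: "non_collapsing n \<theta>"
  shows "intersection_path S E tp I n \<theta>"
proof (rule intersection_path_if_glued[OF path])
  show "\<forall>x\<in>set \<theta>. last x \<in> S"
    using path n last_in_words_alphabet unfolding is_path_def by auto
  have "distinct_adj (map (take (n - 1)) \<theta>)"
    using nc non_collapsing_iff_distinct_adj_take[OF path] by simp
  then have "successively (\<lambda>x y. adjacent n x y \<and> take (n - 1) x \<noteq> take (n - 1) y) \<theta>"
    using path unfolding is_path_iff_successively distinct_adj_def successively_map
      successively_conv_nth by simp
  then show "successively (glued_adjacent n last) \<theta>"
    by (rule successively_mono) (use glued_adjacent_last_if_take_neq in blast)
qed (use n in simp)

lemma intersection_path_if_card_le_2: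
  assumes m: "1 \<le> m" and path: "is_path S E tp I m \<theta>" and card: "card (set \<theta>) \<le> 2"
  shows "intersection_path S E tp I m \<theta>"
proof (cases "length \<theta> = 1")
  case True
  obtain s where "s \<in> S" using S_nonempty by blast
  with True show ?thesis
    by (intro intersection_path_if_glued[OF path m, of "\<lambda>_. s"]) (auto simp: length_Suc_conv)
next
  case False
  then have long: "Suc 0 < length \<theta>" using path unfolding is_path_def by (cases \<theta>) auto
  then have "adjacent m (\<theta> ! 0) (\<theta> ! 1)" using path unfolding is_path_def by fastforce
  then obtain u v t where edge: "(u, v, t) \<in> te m" and uv: "{u, v} = {\<theta> ! 0, \<theta> ! 1}"
    unfolding edges_def by blast
  have "t \<in> T" "u \<noteq> v" using typed_edge_wf[OF edge] by auto
  have "\<theta> ! 0 \<in> set \<theta>" "\<theta> ! 1 \<in> set \<theta>" using long nth_mem by (auto dest: Suc_lessD)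
  then have "{u, v} \<subseteq> set \<theta>" using uv by auto
  moreover have "card {u, v} = 2" using \<open>u \<noteq> v\<close> by simp
  ultimately have set_\<theta>: "set \<theta> = {u, v}" using card by (metis card_seteq List.finite_set)
  obtain a b where ab: "(a, b) \<in> I t" using I_nonempty[OF \<open>t \<in> T\<close>] by auto
  define c where "c z = (if z = u then a else b)" for z
  show ?thesis
  proof (rule intersection_path_if_glued[OF path m, of c])
    show "\<forall>z\<in>set \<theta>. c z \<in> S" using ab I_subset[OF \<open>t \<in> T\<close>] unfolding c_def by auto
    have "glued_edge m c u v" unfolding glued_edge_def c_def using edge ab \<open>u \<noteq> v\<close> by auto
    moreover have "successively (\<noteq>) \<theta>"
      using is_path_distinct_adj[OF path] unfolding distinct_adj_def .
    ultimately show "successively (glued_adjacent m c) \<theta>"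
      by (auto elim!: successively_mono simp: set_\<theta>)
  qed
qed

lemma ipath_witness_eventually_non_collapsing:
  assumes "ipath_witness S E tp I m \<theta> \<Theta>"
  shows "\<exists>N. \<forall>n\<ge>N. 1 < n \<and> non_collapsing n (\<Theta> n)"
proof -
  have paths: "\<And>n. 1 \<le> n \<Longrightarrow> is_path S E tp I n (\<Theta> n)"
    and proj_\<Theta>: "\<And>n k. 1 \<le> k \<Longrightarrow> k < n \<Longrightarrow> proj k (\<Theta> n) = \<Theta> k"
    and conv: "convergent (\<lambda>n. real (path_len (\<Theta> n)))"
    using assms unfolding ipath_witness_def by auto
  from convergent_of_nat_eventually_const[OF conv]
  obtain N where N: "\<forall>n\<ge>N. path_len (\<Theta> n) = path_len (\<Theta> N)" ..
  have "non_collapsing n (\<Theta> n)" if n: "N + 2 \<le> n" for n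
  proof -
    have "path_len (\<Theta> (n - 1)) = path_len (\<Theta> n)"
      using N[rule_format, of n] N[rule_format, of "n - 1"] n by simp
    moreover have "\<Theta> (n - 1) \<noteq> []" "\<Theta> n \<noteq> []"
      using paths[of n] paths[of "n - 1"] n unfolding is_path_def by auto
    ultimately have "length (\<Theta> (n - 1)) = length (\<Theta> n)"
      unfolding path_len_def by (cases "\<Theta> (n - 1)"; cases "\<Theta> n") auto
    moreover have "proj (n - 1) (\<Theta> n) = \<Theta> (n - 1)" using proj_\<Theta> n by simp
    ultimately have "length (proj (n - 1) (\<Theta> n)) = length (\<Theta> n)" by simp
    then have "distinct_adj (map (take (n - 1)) (\<Theta> n))"
      unfolding proj_def distinct_adj_conv_length_remdups_adj by simp
    then show ?thesis using non_collapsing_iff_distinct_adj_take paths[of n] n by simp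
  qed
  then show ?thesis by (intro exI[of _ "N + 2"]) auto
qed

lemma dG_le_path_len: "is_path S E tp I n \<pi> \<Longrightarrow> dG S E tp I n (hd \<pi>) (last \<pi>) \<le> path_len \<pi>"
  unfolding dG_def by (rule Least_le) blast

lemma shortest_path_exists:
  assumes "is_path S E tp I n \<pi>"
  obtains \<rho> where "is_path S E tp I n \<rho>" "hd \<rho> = hd \<pi>" "last \<rho> = last \<pi>"
    "path_len \<rho> = dG S E tp I n (hd \<pi>) (last \<pi>)"
proof -
  have "\<exists>\<rho>. is_path S E tp I n \<rho> \<and> hd \<rho> = hd \<pi> \<and> last \<rho> = last \<pi>
      \<and> path_len \<rho> = dG S E tp I n (hd \<pi>) (last \<pi>)"
    unfolding dG_def by (rule LeastI_ex) (use assms in blast)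
  then show thesis using that by blast
qed

lemma dG_last_le_path_len_add:
  assumes \<pi>: "is_path S E tp I n \<pi>" and \<rho>: "is_path S E tp I n \<rho>" and "hd \<pi> = hd \<rho>"
  shows "dG S E tp I n (last \<pi>) (last \<rho>) \<le> path_len \<pi> + path_len \<rho>"
proof -
  obtain a r where \<rho>_eq: "\<rho> = a # r" using \<rho> unfolding is_path_def by (cases \<rho>) auto
  have "\<pi> \<noteq> []" using \<pi> unfolding is_path_def by simp
  have "is_path S E tp I n (rev \<pi> @ tl \<rho>)"
    using is_path_append_tl[OF is_path_rev[OF \<pi>] \<rho>] assms \<open>\<pi> \<noteq> []\<close> by (simp add: last_rev)
  moreover have "hd (rev \<pi> @ tl \<rho>) = last \<pi>" "last (rev \<pi> @ tl \<rho>) = last \<rho>"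
    using assms \<open>\<pi> \<noteq> []\<close> unfolding \<rho>_eq by (auto simp: hd_rev last_rev)
  moreover have "path_len (rev \<pi> @ tl \<rho>) = path_len \<pi> + path_len \<rho>"
    using \<open>\<pi> \<noteq> []\<close> unfolding \<rho>_eq path_len_def by (cases \<pi>) auto
  ultimately show ?thesis using dG_le_path_len by metis
qed

lemma diamG_le: "(\<And>x y. x \<in> A \<Longrightarrow> y \<in> A \<Longrightarrow> dG S E tp I n x y \<le> D) \<Longrightarrow> diamG S E tp I n A \<le> enat D"
  unfolding diamG_def by (intro SUP_least) auto

lemma dG_le_diamG: "x \<in> A \<Longrightarrow> y \<in> A \<Longrightarrow> enat (dG S E tp I n x y) \<le> diamG S E tp I n A"
  unfolding diamG_def by (intro SUP_upper2[of x] SUP_upper2[of y]) auto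

lemma diamG_mono: "A \<subseteq> B \<Longrightarrow> diamG S E tp I n A \<le> diamG S E tp I n B"
  unfolding diamG_def by (intro SUP_subset_mono) auto

lemma set_subset_fund_nbhd_if_non_collapsing:
  assumes n: "1 < n" and path: "is_path S E tp I n \<theta>" and nc: "non_collapsing n \<theta>"
  shows "set \<theta> \<subseteq> fund_nbhd S E tp I (hd \<theta>)"
proof
  fix x assume "x \<in> set \<theta>"
  then obtain j where j: "j < length \<theta>" "\<theta> ! j = x" by (auto simp: in_set_conv_nth)
  define prefix where "prefix = take (Suc j) \<theta>"
  have "intersection_path S E tp I n prefix"
    using n is_path_take[OF path] non_collapsing_take[OF nc] unfolding prefix_def
    by (intro intersection_path_if_non_collapsing) auto
  moreover have "hd prefix = hd \<theta>" using j unfolding prefix_def by (cases \<theta>) auto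
  moreover have "last prefix = x" using j unfolding prefix_def by (simp add: take_Suc_conv_app_nth)
  moreover have "x \<in> words S n" "length (hd \<theta>) = n"
    using path \<open>x \<in> set \<theta>\<close> is_path_length[OF path] unfolding is_path_def by auto
  ultimately show "x \<in> fund_nbhd S E tp I (hd \<theta>)"
    unfolding fund_nbhd_def by auto
qed

lemma fund_nbhd_short_path:
  assumes D: "\<forall>n \<theta>. 1 < n \<and> is_path S E tp I n \<theta> \<and> non_collapsing n \<theta>
      \<longrightarrow> diamG S E tp I n (set \<theta>) \<le> enat D"
    and x: "x \<in> fund_nbhd S E tp I w"
  obtains \<pi> where "is_path S E tp I (length w) \<pi>" "hd \<pi> = w" "last \<pi> = x" "path_len \<pi> \<le> D"
proof -
  define m where "m = length w"
  obtain \<theta> \<Theta> where wit: "ipath_witness S E tp I m \<theta> \<Theta>" and "hd \<theta> = w" "last \<theta> = x"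
    using x unfolding fund_nbhd_def intersection_path_def m_def by blast
  obtain N where N: "\<forall>n\<ge>N. 1 < n \<and> non_collapsing n (\<Theta> n)"
    using ipath_witness_eventually_non_collapsing[OF wit] by blast
  define n where "n = max N (Suc m)"
  have "1 < n" "non_collapsing n (\<Theta> n)" using N unfolding n_def by auto
  moreover have path: "is_path S E tp I n (\<Theta> n)" and "proj m (\<Theta> n) = \<theta>" "1 \<le> m" "m \<le> n"
    using wit unfolding ipath_witness_def n_def by auto
  ultimately have diam: "diamG S E tp I n (set (\<Theta> n)) \<le> enat D" using D by blast
  have "\<Theta> n \<noteq> []" using path unfolding is_path_def by simp
  then have "enat (dG S E tp I n (hd (\<Theta> n)) (last (\<Theta> n))) \<le> diamG S E tp I n (set (\<Theta> n))"
    by (intro dG_le_diamG) auto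
  also note diam
  finally have "dG S E tp I n (hd (\<Theta> n)) (last (\<Theta> n)) \<le> D" by simp
  obtain \<rho> where \<rho>: "is_path S E tp I n \<rho>" "hd \<rho> = hd (\<Theta> n)" "last \<rho> = last (\<Theta> n)"
    "path_len \<rho> = dG S E tp I n (hd (\<Theta> n)) (last (\<Theta> n))"
    using shortest_path_exists[OF path] by blast
  have "\<rho> \<noteq> []" using \<rho>(1) unfolding is_path_def by simp
  show thesis
  proof (rule that[of "proj m \<rho>", folded m_def])
    show "is_path S E tp I m (proj m \<rho>)" using is_path_proj \<rho>(1) \<open>1 \<le> m\<close> \<open>m \<le> n\<close> by blast
    show "hd (proj m \<rho>) = w" "last (proj m \<rho>) = x"
      using \<open>\<rho> \<noteq> []\<close> \<open>\<Theta> n \<noteq> []\<close> \<rho>(2,3) \<open>proj m (\<Theta> n) = \<theta>\<close> \<open>hd \<theta> = w\<close> \<open>last \<theta> = x\<close>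
      by (metis hd_proj last_proj)+
    show "path_len (proj m \<rho>) \<le> D"
      using path_len_proj_le[of m \<rho>] \<rho>(4) \<open>dG S E tp I n _ _ \<le> D\<close> by simp
  qed
qed

lemma diamG_non_collapsing_le:
  assumes B: "\<forall>w\<in>all_words S. diamG S E tp I (length w) (fund_nbhd S E tp I w) \<le> enat B"
    and "1 < n" "is_path S E tp I n \<theta>" "non_collapsing n \<theta>"
  shows "diamG S E tp I n (set \<theta>) \<le> enat B"
proof -
  have "hd \<theta> \<in> words S n" using assms(3) unfolding is_path_def by auto
  then have "hd \<theta> \<in> all_words S" "length (hd \<theta>) = n"
    using assms(2) unfolding all_words_def words_def by auto
  then show ?thesis
    using diamG_mono[OF set_subset_fund_nbhd_if_non_collapsing[OF assms(2-4)]] B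
    by (metis order_trans)
qed

lemma diamG_fund_nbhd_le:
  assumes D: "\<forall>n \<theta>. 1 < n \<and> is_path S E tp I n \<theta> \<and> non_collapsing n \<theta>
      \<longrightarrow> diamG S E tp I n (set \<theta>) \<le> enat D"
  shows "diamG S E tp I (length w) (fund_nbhd S E tp I w) \<le> enat (2 * D)"
proof (rule diamG_le)
  fix x y assume "x \<in> fund_nbhd S E tp I w" "y \<in> fund_nbhd S E tp I w"
  with fund_nbhd_short_path[OF D] obtain \<pi> \<rho>
    where "is_path S E tp I (length w) \<pi>" "hd \<pi> = w" "last \<pi> = x" "path_len \<pi> \<le> D"
      and "is_path S E tp I (length w) \<rho>" "hd \<rho> = w" "last \<rho> = y" "path_len \<rho> \<le> D"
    by metis
  then show "dG S E tp I (length w) x y \<le> 2 * D"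
    using dG_last_le_path_len_add[of "length w" \<pi> \<rho>] by simp
qed

theorem bounded_geometry_iff_non_collapsing_diam_bounded:
  "bounded_geometry S E tp I \<longleftrightarrow>
     (SUP p\<in>{(n, \<theta>). 1 < n \<and> is_path S E tp I n \<theta> \<and> non_collapsing n \<theta>}.
        diamG S E tp I (fst p) (set (snd p))) < \<infinity>"
proof -
  have "(\<exists>B. \<forall>w\<in>all_words S. diamG S E tp I (length w) (fund_nbhd S E tp I w) \<le> enat B)
    \<longleftrightarrow> (\<exists>D. \<forall>n \<theta>. 1 < n \<and> is_path S E tp I n \<theta> \<and> non_collapsing n \<theta>
            \<longrightarrow> diamG S E tp I n (set \<theta>) \<le> enat D)"
    using diamG_non_collapsing_le diamG_fund_nbhd_le by blast
  then show ?thesis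
    unfolding bounded_geometry_def enat_SUP_less_infinity_iff by auto
qed

end

theorem lemma5p3:
  fixes S :: "'v set" and E :: "('v \<times> 'v) set" and tp :: "'v \<times> 'v \<Rightarrow> 't"
    and T :: "'t set" and I :: "'t \<Rightarrow> ('v \<times> 'v) set"
  assumes igs: "is_IGS S E tp T I"
    and gr1: "GR1 S T I" and gr2: "GR2 S E tp T I" and gr3: "GR3 T I"
  shows "(\<forall>m \<theta>. 1 \<le> m \<and> is_path S E tp I m \<theta> \<and> card (set \<theta>) \<le> 2
            \<longrightarrow> intersection_path S E tp I m \<theta>)
     \<and> (\<forall>n \<theta>. 1 < n \<and> is_path S E tp I n \<theta> \<and> non_collapsing n \<theta>
            \<longrightarrow> intersection_path S E tp I n \<theta>)
     \<and> (\<forall>m \<theta> \<Theta>. ipath_witness S E tp I m \<theta> \<Theta>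
            \<longrightarrow> (\<exists>N. \<forall>n\<ge>N. 1 < n \<and> non_collapsing n (\<Theta> n)))
     \<and> (bounded_geometry S E tp I \<longleftrightarrow>
          (SUP p\<in>{(n, \<theta>). 1 < n \<and> is_path S E tp I n \<theta> \<and> non_collapsing n \<theta>}.
              diamG S E tp I (fst p) (set (snd p))) < \<infinity>)"
proof -
  interpret iterated_graph_system S E tp T I
    using igs by unfold_locales
  show ?thesis
    using intersection_path_if_card_le_2 intersection_path_if_non_collapsing
      ipath_witness_eventually_non_collapsing bounded_geometry_iff_non_collapsing_diam_bounded
    by blast
qed

end
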